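(* Let $n,t\ge1$ be integers and $b\ge0$ real. Consider the negative-fill variable-processor cup game on $n$ cups, starting from all fills $0$, played for $t$ rounds against a greedy emptier. The following are equivalent: (1) the filler can guarantee that after $t$ rounds at least one cup has fill $\ge b$; (2) the filler can guarantee that after $t$ rounds at least one cup has fill $\le -b$; (3) the filler can guarantee that after $t$ rounds at least one cup has fill $\ge b$ or at least one cup has fill $\le -b$.
   Context: Negative-fill variable-processor cup game: real fills $x_1,\dots,x_n$; in each round the filler chooses an integer $1\le p\le n$ and reals $a_i\in[0,1]$ with $\sum_i a_i=p$ and adds $a_i$ to cup $i$; then the emptier chooses $p$ distinct cups and subtracts exactly $1$ from each (fills may become negative). The greedy emptier always subtracts from the $p$ fullest cups after the filler's move. *)

theory Defs
  imports Complex_Main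
begin

text \<open>Cups are indexed by 0,...,n-1; a state is a function nat => real,
  of which only the values at indices below n are meaningful.\<close>

definition valid_fill :: "nat \<Rightarrow> nat \<Rightarrow> (nat \<Rightarrow> real) \<Rightarrow> bool" where
  "valid_fill n p a \<longleftrightarrow> 1 \<le> p \<and> p \<le> n \<and> (\<forall>i<n. 0 \<le> a i \<and> a i \<le> 1)
     \<and> (\<Sum>i<n. a i) = real p"

definition greedy_choice :: "nat \<Rightarrow> nat \<Rightarrow> (nat \<Rightarrow> real) \<Rightarrow> nat set \<Rightarrow> bool" where
  "greedy_choice n p y S \<longleftrightarrow> S \<subseteq> {..<n} \<and> card S = p
     \<and> (\<forall>i\<in>S. \<forall>j\<in>{..<n} - S. y j \<le> y i)"

text \<open>filler_wins n t G x: from state x, the filler has a (adaptive) strategy such that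
  after t more rounds against the greedy emptier (whatever its tie-breaking),
  the final state satisfies G.\<close>
fun filler_wins :: "nat \<Rightarrow> nat \<Rightarrow> ((nat \<Rightarrow> real) \<Rightarrow> bool) \<Rightarrow> (nat \<Rightarrow> real) \<Rightarrow> bool" where
  "filler_wins n 0 G x = G x"
| "filler_wins n (Suc t) G x =
     (\<exists>p a. valid_fill n p a \<and>
        (\<forall>S. greedy_choice n p (\<lambda>i. x i + a i) S \<longrightarrow>
           filler_wins n t G (\<lambda>i. x i + a i - (if i \<in> S then 1 else 0))))"

end

theory Submission
  imports Defs "HOL-Combinatorics.Permutations"
begin

(* Two symmetries of the game against the greedy emptier.

   Negation: if the filler adds a on p cups and the emptier removes the set S, then in the
   game with all fills negated the filler adds 1 - a on n - p cups; the greedy sets of that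
   move are exactly the complements of the greedy sets of the original one, and the outcome
   is exactly the negated outcome. So reaching a fill >= b and reaching a fill <= -b are
   equally easy.

   Tie-breaking: two greedy choices differ only by exchanging cups of equal fill, so their
   outcomes are permutations of each other. For goals invariant under permuting the cups,
   a strategy winning the disjunction of two such goals therefore wins one of them outright:
   by induction on the rounds, the disjunct won after one particular greedy choice is won
   after every greedy choice. *)

abbreviation emptied :: "(nat \<Rightarrow> real) \<Rightarrow> nat set \<Rightarrow> nat \<Rightarrow> real" where
  "emptied y S \<equiv> \<lambda>k. y k - (if k \<in> S then 1 else 0)"

definition symmetric_goal :: "nat \<Rightarrow> ((nat \<Rightarrow> real) \<Rightarrow> bool) \<Rightarrow> bool" where
  "symmetric_goal n G \<longleftrightarrow> (\<forall>\<sigma> z. \<sigma> permutes {..<n} \<longrightarrow> G (z \<circ> \<sigma>) = G z)"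

lemma filler_wins_mono:
  assumes "filler_wins n t G x" and "\<And>z. G z \<Longrightarrow> H z"
  shows "filler_wins n t H x"
  using assms(1) by (induction t arbitrary: x) (use assms(2) in fastforce)+

lemma greedy_choice_cong:
  assumes "\<And>i. i < n \<Longrightarrow> y i = y' i"
  shows "greedy_choice n p y S \<longleftrightarrow> greedy_choice n p y' S"
  using assms by (auto simp: greedy_choice_def subset_eq)

lemma greedy_choice_exists:
  assumes "p \<le> n"
  shows "\<exists>S. greedy_choice n p y S"
  using assms
proof (induction p)
  case 0
  show ?case by (auto simp: greedy_choice_def)
next
  case (Suc p)
  then obtain S where S: "greedy_choice n p y S" by auto
  then have S_sub: "S \<subseteq> {..<n}" and S_card: "card S = p" and "finite S"
    by (auto simp: greedy_choice_def finite_subset)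
  let ?R = "{..<n} - S"
  have "card ?R = n - p" using S_sub S_card by (simp add: card_Diff_subset \<open>finite S\<close>)
  then have "?R \<noteq> {}" using Suc.prems by (metis Suc_le_eq card.empty zero_less_diff less_irrefl)
  then have "Max (y ` ?R) \<in> y ` ?R" by (intro Max_in) auto
  then obtain m where m: "m \<in> ?R" "y m = Max (y ` ?R)" by auto
  have m_max: "y l \<le> y m" if "l \<in> ?R" for l
    using that m(2) by simp
  have "greedy_choice n (Suc p) y (insert m S)"
    using S m(1) m_max \<open>finite S\<close> by (auto simp: greedy_choice_def)
  then show ?case ..
qed

lemma greedy_choice_permute:
  assumes "\<sigma> permutes {..<n}" and "greedy_choice n p (y \<circ> \<sigma>) S"
  shows "greedy_choice n p y (\<sigma> ` S)"
  unfolding greedy_choice_def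
proof (intro conjI ballI)
  have S_sub: "S \<subseteq> {..<n}" and "card S = p"
    using assms(2) by (auto simp: greedy_choice_def)
  show "\<sigma> ` S \<subseteq> {..<n}"
    using S_sub permutes_image[OF assms(1)] by auto
  show "card (\<sigma> ` S) = p"
    using \<open>card S = p\<close> card_image permutes_inj_on[OF assms(1)] by metis
  fix i j assume i: "i \<in> \<sigma> ` S" and j: "j \<in> {..<n} - \<sigma> ` S"
  obtain i' where "i' \<in> S" "i = \<sigma> i'" using i by auto
  moreover obtain j' where "j' \<in> {..<n} - S" "j = \<sigma> j'"
    using j permutes_image[OF assms(1)] by auto
  ultimately show "y j \<le> y i"
    using assms(2) by (auto simp: greedy_choice_def)
qed

lemma filler_wins_permute:
  assumes "symmetric_goal n G" and "\<sigma> permutes {..<n}" and "filler_wins n t G x"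
  shows "filler_wins n t G (x \<circ> \<sigma>)"
  using assms(3)
proof (induction t arbitrary: x)
  case 0
  then show ?case using assms(1,2) unfolding symmetric_goal_def by (metis filler_wins.simps(1))
next
  case (Suc t)
  then obtain p a where fill: "valid_fill n p a"
    and win: "\<And>S. greedy_choice n p (\<lambda>i. x i + a i) S \<Longrightarrow>
                 filler_wins n t G (emptied (\<lambda>i. x i + a i) S)"
    by auto
  have "valid_fill n p (a \<circ> \<sigma>)"
    using fill sum.permute[OF assms(2), of a] permutes_image[OF assms(2)]
    by (auto simp: valid_fill_def)
  moreover have "filler_wins n t G (emptied (\<lambda>i. (x \<circ> \<sigma>) i + (a \<circ> \<sigma>) i) S)"
    if "greedy_choice n p (\<lambda>i. (x \<circ> \<sigma>) i + (a \<circ> \<sigma>) i) S" for S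
  proof -
    have "greedy_choice n p (\<lambda>i. x i + a i) (\<sigma> ` S)"
      using greedy_choice_permute[OF assms(2)] that by (simp add: comp_def)
    from Suc.IH[OF win[OF this]]
    have "filler_wins n t G (emptied (\<lambda>i. x i + a i) (\<sigma> ` S) \<circ> \<sigma>)" .
    moreover have "emptied (\<lambda>i. x i + a i) (\<sigma> ` S) \<circ> \<sigma> = emptied (\<lambda>i. (x \<circ> \<sigma>) i + (a \<circ> \<sigma>) i) S"
      using inj_image_mem_iff[OF permutes_inj[OF assms(2)]] by auto
    ultimately show ?thesis by simp
  qed
  ultimately show ?case by (auto simp del: comp_apply)
qed

lemma symmetric_goal_ex: "symmetric_goal n (\<lambda>z. \<exists>i<n. P (z i))"
  unfolding symmetric_goal_def
proof (intro allI impI)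
  fix \<sigma> and z :: "nat \<Rightarrow> real"
  assume "\<sigma> permutes {..<n}"
  then have "\<sigma> ` {..<n} = {..<n}" by (rule permutes_image)
  then show "(\<exists>i<n. P ((z \<circ> \<sigma>) i)) = (\<exists>i<n. P (z i))"
    by (metis (no_types, lifting) comp_apply imageE imageI lessThan_iff)
qed

lemma greedy_choice_exchange:
  assumes S: "greedy_choice n p y S" and T: "greedy_choice n p y T"
    and i: "i \<in> S - T" and j: "j \<in> T - S"
  shows "y i = y j" and "greedy_choice n p y (insert j (S - {i}))"
proof -
  have ij: "i < n" "j < n"
    using S T i j by (auto simp: greedy_choice_def)
  have "y j \<le> y i" using S i j ij by (simp add: greedy_choice_def)
  moreover have "y i \<le> y j" using T i j ij by (simp add: greedy_choice_def)
  ultimately show yij: "y i = y j" by simp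
  have S_sub: "S \<subseteq> {..<n}" and "card S = p" and "finite S"
    and S_max: "\<And>k l. k \<in> S \<Longrightarrow> l \<in> {..<n} - S \<Longrightarrow> y l \<le> y k"
    using S by (auto simp: greedy_choice_def finite_subset)
  show "greedy_choice n p y (insert j (S - {i}))"
    unfolding greedy_choice_def
  proof (intro conjI ballI)
    show "insert j (S - {i}) \<subseteq> {..<n}" using S_sub ij by auto
    have "p > 0" using \<open>card S = p\<close> \<open>finite S\<close> i card_gt_0_iff by blast
    then show "card (insert j (S - {i})) = p"
      using \<open>card S = p\<close> \<open>finite S\<close> i j by (simp add: card_Suc_Diff1)
    fix k l assume k: "k \<in> insert j (S - {i})" and l: "l \<in> {..<n} - insert j (S - {i})"
    have "y l \<le> y i"
      using l S_max i by (cases "l = i") auto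
    moreover have "y j \<le> y k" if "k \<noteq> j"
      using that k j ij S_max by auto
    ultimately show "y l \<le> y k"
      using k yij by (cases "k = j") auto
  qed
qed

lemma greedy_choices_differ_by_permutation:
  assumes "greedy_choice n p y S" and "greedy_choice n p y T"
  shows "\<exists>\<sigma>. \<sigma> permutes {..<n} \<and> emptied y T = emptied y S \<circ> \<sigma>"
  using assms
proof (induction "card (S - T)" arbitrary: S)
  case 0
  then have "finite S" "finite T" "card S = card T" "S - T = {}"
    by (auto simp: greedy_choice_def finite_subset)
  then have "S = T" by (metis Diff_eq_empty_iff card_subset_eq)
  then show ?case using permutes_id by fastforce
next
  case (Suc m)
  then have fin: "finite S" "finite T" and "card S = card T"
    by (auto simp: greedy_choice_def finite_subset)
  then have "card (T - S) = card (S - T)"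
    by (simp add: card_Diff_subset_Int Int_commute)
  then have "S - T \<noteq> {}" and "T - S \<noteq> {}"
    using Suc.hyps(2) by force+
  then obtain i j where i: "i \<in> S - T" and j: "j \<in> T - S"
    by blast
  then have ij: "i < n" "j < n"
    using Suc.prems by (auto simp: greedy_choice_def)
  let ?S' = "insert j (S - {i})"
  have "m = card (?S' - T)"
    using Suc.hyps(2) i j fin by (simp add: insert_Diff_if Diff_insert2[symmetric] card_Diff_singleton)
  then obtain \<sigma> where \<sigma>: "\<sigma> permutes {..<n}" "emptied y T = emptied y ?S' \<circ> \<sigma>"
    using Suc.hyps(1)[OF _ greedy_choice_exchange(2)[OF Suc.prems i j] Suc.prems(2)] by blast
  have "emptied y ?S' = emptied y S \<circ> transpose i j"
    using i j greedy_choice_exchange(1)[OF Suc.prems i j] by (auto simp: transpose_def)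
  then have "emptied y T = emptied y S \<circ> (transpose i j \<circ> \<sigma>)"
    using \<sigma>(2) by (simp add: comp_assoc)
  moreover have "transpose i j \<circ> \<sigma> permutes {..<n}"
    using permutes_compose[OF \<sigma>(1) permutes_swap_id] ij by simp
  ultimately show ?case by blast
qed

lemma filler_wins_greedy_choice_irrelevant:
  assumes "symmetric_goal n G" and "greedy_choice n p y S0" and "greedy_choice n p y S"
    and "filler_wins n t G (emptied y S0)"
  shows "filler_wins n t G (emptied y S)"
proof -
  obtain \<sigma> where "\<sigma> permutes {..<n}" "emptied y S = emptied y S0 \<circ> \<sigma>"
    using greedy_choices_differ_by_permutation[OF assms(2,3)] by blast
  then show ?thesis
    using filler_wins_permute[OF assms(1) _ assms(4)] by simp
qed

lemma filler_wins_disj_split: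
  assumes "symmetric_goal n G" and "symmetric_goal n H"
    and "filler_wins n t (\<lambda>z. G z \<or> H z) x"
  shows "filler_wins n t G x \<or> filler_wins n t H x"
  using assms(3)
proof (induction t arbitrary: x)
  case 0
  then show ?case by simp
next
  case (Suc t)
  then obtain p a where fill: "valid_fill n p a"
    and win: "\<And>S. greedy_choice n p (\<lambda>i. x i + a i) S \<Longrightarrow>
                 filler_wins n t (\<lambda>z. G z \<or> H z) (emptied (\<lambda>i. x i + a i) S)"
    by auto
  have "p \<le> n" using fill by (simp add: valid_fill_def)
  then obtain S0 where S0: "greedy_choice n p (\<lambda>i. x i + a i) S0"
    using greedy_choice_exists by blast
  have "filler_wins n (Suc t) K x"
    if "symmetric_goal n K" and "filler_wins n t K (emptied (\<lambda>i. x i + a i) S0)" for K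
    using fill filler_wins_greedy_choice_irrelevant[OF that(1) S0 _ that(2)] by auto
  then show ?case
    using Suc.IH[OF win[OF S0]] assms(1,2) by blast
qed

lemma valid_fill_full:
  assumes "valid_fill n n a" and "i < n"
  shows "a i = 1"
proof -
  have "(\<Sum>k<n. 1 - a k) = 0"
    using assms(1) by (simp add: valid_fill_def sum_subtractf)
  moreover have "\<forall>k\<in>{..<n}. 0 \<le> 1 - a k"
    using assms(1) by (simp add: valid_fill_def)
  ultimately show ?thesis
    using assms(2) sum_nonneg_eq_0_iff[of "{..<n}" "\<lambda>k. 1 - a k"] by simp
qed

lemma greedy_choice_complement:
  assumes "p \<le> n" and "greedy_choice n (n - p) (\<lambda>i. c - y i) S"
  shows "greedy_choice n p y ({..<n} - S)"
  using assms by (auto simp: greedy_choice_def card_Diff_subset finite_subset)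

lemma mirror_round:
  assumes fill: "valid_fill n p a"
  obtains p' a' where "valid_fill n p' a'"
    and "\<And>S'. greedy_choice n p' (\<lambda>i. - x i + a' i) S' \<Longrightarrow>
           \<exists>S. greedy_choice n p (\<lambda>i. x i + a i) S \<and>
               emptied (\<lambda>i. - x i + a' i) S' = (\<lambda>i. - emptied (\<lambda>i. x i + a i) S i)"
proof (cases "p = n")
  case True
  \<comment> \<open>The complementary move would fill no cup, which is illegal; but here every cup
    gains and loses one unit, so the filler simply repeats the move.\<close>
  define a' where "a' i = (if i < n then 1 else - a i)" for i
  have "valid_fill n n a'"
    using fill True by (simp add: valid_fill_def a'_def)
  moreover have "greedy_choice n p (\<lambda>i. x i + a i) {..<n} \<and>
      emptied (\<lambda>i. - x i + a' i) S' = (\<lambda>i. - emptied (\<lambda>i. x i + a i) {..<n} i)"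
    if "greedy_choice n n (\<lambda>i. - x i + a' i) S'" for S'
  proof -
    have "S' \<subseteq> {..<n}" "card S' = n"
      using that by (auto simp: greedy_choice_def)
    then have "S' = {..<n}"
      by (metis card_lessThan card_subset_eq finite_lessThan)
    then show ?thesis
      using True valid_fill_full[OF fill[unfolded True]] by (auto simp: greedy_choice_def a'_def)
  qed
  ultimately show ?thesis using that by blast
next
  case False
  then have "p < n" using fill by (simp add: valid_fill_def)
  \<comment> \<open>Off the cups, a' makes the mirrored state the exact negation as a function.\<close>
  define a' where "a' i = (if i < n then 1 - a i else - a i)" for i
  have "(\<Sum>i<n. a' i) = real n - real p"
    using fill by (simp add: a'_def valid_fill_def sum_subtractf)
  then have "valid_fill n (n - p) a'"
    using fill \<open>p < n\<close> by (auto simp: valid_fill_def a'_def of_nat_diff)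
  moreover have "greedy_choice n p (\<lambda>i. x i + a i) ({..<n} - S') \<and>
      emptied (\<lambda>i. - x i + a' i) S' = (\<lambda>i. - emptied (\<lambda>i. x i + a i) ({..<n} - S') i)"
    if S': "greedy_choice n (n - p) (\<lambda>i. - x i + a' i) S'" for S'
  proof
    have "greedy_choice n (n - p) (\<lambda>i. 1 - (x i + a i)) S'"
      using S' by (subst greedy_choice_cong) (auto simp: a'_def)
    then show "greedy_choice n p (\<lambda>i. x i + a i) ({..<n} - S')"
      using \<open>p < n\<close> by (intro greedy_choice_complement) auto
    show "emptied (\<lambda>i. - x i + a' i) S' = (\<lambda>i. - emptied (\<lambda>i. x i + a i) ({..<n} - S') i)"
      using S' by (auto simp: a'_def greedy_choice_def intro!: ext)
  qed
  ultimately show ?thesis using that by blast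
qed

lemma filler_wins_mirror:
  assumes "filler_wins n t G x"
  shows "filler_wins n t (\<lambda>z. G (\<lambda>i. - z i)) (\<lambda>i. - x i)"
  using assms
proof (induction t arbitrary: x)
  case 0
  then show ?case by simp
next
  case (Suc t)
  then obtain p a where fill: "valid_fill n p a"
    and win: "\<And>S. greedy_choice n p (\<lambda>i. x i + a i) S \<Longrightarrow>
                 filler_wins n t G (emptied (\<lambda>i. x i + a i) S)"
    by auto
  obtain p' a' where "valid_fill n p' a'"
    and mirrored: "\<And>S'. greedy_choice n p' (\<lambda>i. - x i + a' i) S' \<Longrightarrow>
           \<exists>S. greedy_choice n p (\<lambda>i. x i + a i) S \<and>
               emptied (\<lambda>i. - x i + a' i) S' = (\<lambda>i. - emptied (\<lambda>i. x i + a i) S i)"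
    using mirror_round[OF fill] by blast
  moreover have "filler_wins n t (\<lambda>z. G (\<lambda>i. - z i)) (emptied (\<lambda>i. - x i + a' i) S')"
    if "greedy_choice n p' (\<lambda>i. - x i + a' i) S'" for S'
    using mirrored[OF that] Suc.IH[OF win] by auto
  ultimately show ?case by auto
qed

theorem propositionA1:
  fixes n t :: nat and b :: real
  assumes "n \<ge> 1" and "t \<ge> 1" and "b \<ge> 0"
  shows "(filler_wins n t (\<lambda>x. \<exists>i<n. x i \<ge> b) (\<lambda>_. 0)
            \<longleftrightarrow> filler_wins n t (\<lambda>x. \<exists>i<n. x i \<le> - b) (\<lambda>_. 0))
       \<and> (filler_wins n t (\<lambda>x. \<exists>i<n. x i \<le> - b) (\<lambda>_. 0)
            \<longleftrightarrow> filler_wins n t (\<lambda>x. (\<exists>i<n. x i \<ge> b) \<or> (\<exists>i<n. x i \<le> - b)) (\<lambda>_. 0))"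
proof -
  let ?high = "\<lambda>x. \<exists>i<n. x i \<ge> b" and ?low = "\<lambda>x. \<exists>i<n. x i \<le> - b"
  have high_low: "filler_wins n t ?high (\<lambda>_. 0) \<longleftrightarrow> filler_wins n t ?low (\<lambda>_. 0)"
    using filler_wins_mirror[of n t ?high "\<lambda>_. 0"] filler_wins_mirror[of n t ?low "\<lambda>_. 0"]
    by (auto simp: le_minus_iff minus_le_iff)
  have "filler_wins n t (\<lambda>x. ?high x \<or> ?low x) (\<lambda>_. 0) \<Longrightarrow> filler_wins n t ?low (\<lambda>_. 0)"
    using filler_wins_disj_split[OF symmetric_goal_ex[of n "\<lambda>v. b \<le> v"] symmetric_goal_ex[of n "\<lambda>v. v \<le> - b"]]
      high_low by blast
  moreover have "filler_wins n t ?low (\<lambda>_. 0) \<Longrightarrow> filler_wins n t (\<lambda>x. ?high x \<or> ?low x) (\<lambda>_. 0)"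
    by (erule filler_wins_mono) simp
  ultimately show ?thesis
    using high_low by blast
qed

end
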